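(* In the setting of the context, consider a Case 1 spacetime ($x_-(v)\equiv0$). If $(dx_+/dv)/x_+^2$ converges as $v\to\infty$ and $\lim_{v\to\infty}\frac{dx_+/dv}{x_+(v)^2}>-\frac{h_c}{2}$, then the spacetime is of Type 2.
   Context: Spherically symmetric spacetime $ds^2=-f(v,r)A(v,r)^2dv^2+2A(v,r)\,dr\,dv+r^2d\Omega^2$ with $A>0$, $f,A\to1$ as $r\to\infty$, $f(v,0)=1$, $\partial_rf(v,0)=\partial_rA(v,0)=0$; $f(v,\cdot)$ has exactly two zeros $r_+(v)>r_-(v)$ (outer/inner apparent horizons, AHs), $f=F(r-r_+)(r-r_-)$ with $F>0$, and $h=AF>0$. Assumptions: $\partial_v r_+<0$; $r_\pm(v)\to r_c$ as $v\to\infty$; the sign of $\partial_v r_-$ is constant; the $v\to\infty$ limits of $A,F,h$ behave as analytic functions of $r$, so all $\partial_r^n h$ converge as $v\to\infty$; $h_c=\lim_{v\to\infty}h(v,r_c)$. With $x=r-r_c$, $x_\pm=r_\pm-r_c$ and $h$ regarded as a function of $(v,x)$, radially outgoing null geodesics solve $dx/dv=\tfrac12h(v,x)(x-x_+(v))(x-x_-(v))$. Case 1 means $\partial_v r_-=0$. Type 1 (Case 1) means every outgoing null geodesic strictly between the two AHs crosses the outer AH (the inner AH is the event horizon); Type 2 means there is an event horizon strictly outside the inner AH. *)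

theory Defs
  imports "HOL-Analysis.Analysis"
begin

text \<open>Coordinates: x = r - r_c.\<close>

definition outgoing_null_geodesic ::
  "(real \<Rightarrow> real \<Rightarrow> real) \<Rightarrow> (real \<Rightarrow> real) \<Rightarrow> (real \<Rightarrow> real) \<Rightarrow> real \<Rightarrow> (real \<Rightarrow> real) \<Rightarrow> bool"
  where "outgoing_null_geodesic h xp xm v0 x \<longleftrightarrow>
    (\<forall>v\<ge>v0. (x has_real_derivative
        (1/2) * h v (x v) * (x v - xp v) * (x v - xm v)) (at v within {v0..}))"

text \<open>Type 2: there is an event horizon strictly outside the inner apparent horizon,
  i.e. an outgoing null geodesic lying strictly between the two apparent horizons
  for all later times (it never crosses the outer apparent horizon).\<close>

definition type2 ::
  "(real \<Rightarrow> real \<Rightarrow> real) \<Rightarrow> (real \<Rightarrow> real) \<Rightarrow> (real \<Rightarrow> real) \<Rightarrow> bool"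
  where "type2 h xp xm \<longleftrightarrow>
    (\<exists>v0 x. outgoing_null_geodesic h xp xm v0 x \<and>
       (\<forall>v\<ge>v0. xm v < x v \<and> x v < xp v))"

end

theory Submission
  imports Defs
begin

text \<open>In the coordinate y = ln x the inner horizon x = 0 is pushed to y = -\<infinity>, so solutions
  of the outgoing null geodesic equation stay positive automatically. Choose c \<in> (0,1) with
  hc (1 - c) / 2 + L > 0. Along the curve b = c x_+,
    b' - h(v,b) (b - x_+) b / 2 = c x_+^2 (h(v,b) (1 - c) / 2 + x_+' / x_+^2),
  and the bracket tends to hc (1 - c) / 2 + L > 0. So for late times b is a strict
  supersolution, and a geodesic started below it stays in (0, c x_+) forever.
  Such a geodesic exists for all later times: uniform convergence of h and \<partial>h/\<partial>x on [0,1]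
  bounds both for late v, so the equation in y, truncated at x = 1, is bounded and globally
  Lipschitz and is solved on a whole half-line by Picard iteration in Bielecki's weighted sup
  norm; below the barrier the truncation is inactive.\<close>

lemma integral_has_real_derivative_Ici:
  fixes g :: "real \<Rightarrow> real"
  assumes "continuous_on {a..} g" "a \<le> t"
  shows "((\<lambda>x. integral {a..x} g) has_real_derivative g t) (at t within {a..})"
proof -
  have "at t within {a..} = at t within {a..t+1}"
    by (rule at_within_nhd[where S = "{..<t+1}"]) auto
  moreover have "((\<lambda>x. integral {a..x} g) has_real_derivative g t) (at t within {a..t+1})"
    using assms by (intro integral_has_real_derivative) (auto intro: continuous_on_subset)
  ultimately show ?thesis
    by simp
qed

locale bounded_lipschitz_rhs =
  fixes G :: "real \<Rightarrow> real \<Rightarrow> real" and M K :: real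
  assumes continuous: "continuous_on UNIV (\<lambda>(t, y). G t y)"
    and bounded: "\<And>t y. \<bar>G t y\<bar> \<le> M"
    and lipschitz: "\<And>t. K-lipschitz_on UNIV (G t)"
    and K_pos: "0 < K"
begin

definition weight :: "real \<Rightarrow> real \<Rightarrow> real"
  where "weight a t = exp (2 * K * (t - a))"

text \<open>The exponential weight (Bielecki) makes it a 1/2-contraction for the sup norm on the
  whole half-line.\<close>

definition picard :: "real \<Rightarrow> real \<Rightarrow> (real \<Rightarrow> real) \<Rightarrow> real \<Rightarrow> real"
  where "picard a y0 u t =
    (y0 + integral {a..max a t} (\<lambda>s. G s (weight a s * u s))) / weight a (max a t)"

lemma continuous_on_rhs_along:
  assumes "continuous_on UNIV z"
  shows "continuous_on UNIV (\<lambda>t. G t (z t))"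
proof -
  have "continuous_on UNIV (\<lambda>t. (t, z t))"
    using assms by (intro continuous_intros)
  then show ?thesis
    using continuous_on_compose2[OF continuous, of UNIV "\<lambda>t. (t, z t)"] by simp
qed

lemma weight_pos: "0 < weight a t"
  by (simp add: weight_def)

lemma continuous_on_weight: "continuous_on UNIV (weight a)"
  unfolding weight_def by (intro continuous_intros)

lemma integral_weight:
  assumes "a \<le> T"
  shows "integral {a..T} (weight a) = (weight a T - 1) / (2 * K)"
proof -
  have "((\<lambda>s. weight a s / (2 * K)) has_real_derivative weight a s) (at s within {a..T})" for s
    unfolding weight_def using K_pos by (auto intro!: derivative_eq_intros)
  then have "(weight a has_integral weight a T / (2 * K) - weight a a / (2 * K)) {a..T}"
    using assms by (intro fundamental_theorem_of_calculus)
      (auto simp: has_real_derivative_iff_has_vector_derivative[symmetric])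
  then show ?thesis
    by (simp add: integral_unique weight_def diff_divide_distrib)
qed

lemma picard_bcontfun:
  assumes "continuous_on UNIV u"
  shows "picard a y0 u \<in> bcontfun"
proof (rule bcontfun_normI)
  define g where "g s = G s (weight a s * u s)" for s
  have g: "continuous_on UNIV g"
    unfolding g_def using assms continuous_on_weight by (intro continuous_on_rhs_along continuous_intros)
  have "continuous_on {a..} (\<lambda>t. integral {a..t} g)"
    using integral_has_real_derivative_Ici[of a g] g
    by (intro DERIV_continuous_on) (auto intro: continuous_on_subset)
  then have "continuous_on UNIV (\<lambda>t. integral {a..max a t} g)"
    by (rule continuous_on_compose2) (auto intro: continuous_intros)
  then show "continuous_on UNIV (picard a y0 u)"
    unfolding picard_def g_def[symmetric] using weight_pos
    by (intro continuous_intros continuous_on_compose2[OF continuous_on_weight]) (auto simp: weight_def)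
  fix t
  define \<tau> where "\<tau> = max a t - a"
  have \<tau>: "0 \<le> \<tau>" "weight a (max a t) = exp (2 * K * \<tau>)"
    by (auto simp: \<tau>_def weight_def)
  have "\<bar>integral {a..max a t} g\<bar> \<le> M * \<tau>"
    using integral_bound[of a "max a t" g M] g bounded by (auto simp: \<tau>_def g_def intro: continuous_on_subset)
  then have "norm (picard a y0 u t) \<le> (\<bar>y0\<bar> + M * \<tau>) / exp (2 * K * \<tau>)"
    by (auto simp: picard_def g_def[symmetric] \<tau> intro!: divide_right_mono)
  also have "\<dots> = \<bar>y0\<bar> / exp (2 * K * \<tau>) + M * \<tau> / exp (2 * K * \<tau>)"
    by (simp add: add_divide_distrib)
  also have "\<dots> \<le> \<bar>y0\<bar> + M / (2 * K)"
  proof (rule add_mono)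
    show "\<bar>y0\<bar> / exp (2 * K * \<tau>) \<le> \<bar>y0\<bar>"
      using \<tau> K_pos by (simp add: divide_le_eq mult_le_cancel_left1)
    have "M * (2 * K * \<tau>) \<le> M * exp (2 * K * \<tau>)"
      using exp_ge_add_one_self[of "2 * K * \<tau>"] bounded[of 0 0] by (intro mult_left_mono) linarith+
    then show "M * \<tau> / exp (2 * K * \<tau>) \<le> M / (2 * K)"
      using K_pos by (simp add: divide_simps mult_ac)
  qed
  finally show "norm (picard a y0 u t) \<le> \<bar>y0\<bar> + M / (2 * K)" .
qed

lemma picard_contraction:
  assumes u: "continuous_on UNIV u" and w: "continuous_on UNIV w"
    and d: "\<And>s. \<bar>u s - w s\<bar> \<le> d"
  shows "\<bar>picard a y0 u t - picard a y0 w t\<bar> \<le> d / 2"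
proof -
  define T where "T = max a t"
  define g where "g v s = G s (weight a s * v s)" for v s
  have g: "continuous_on {a..T} (g v)" if "continuous_on UNIV v" for v
    unfolding g_def using that continuous_on_weight
    by (intro continuous_on_subset[OF continuous_on_rhs_along]) (auto intro: continuous_intros)
  have "\<bar>g u s - g w s\<bar> \<le> K * d * weight a s" for s
  proof -
    have "\<bar>g u s - g w s\<bar> \<le> K * \<bar>weight a s * u s - weight a s * w s\<bar>"
      using lipschitz_onD[OF lipschitz] by (simp add: g_def dist_real_def)
    also have "\<dots> \<le> K * (weight a s * d)"
      using d[of s] weight_pos[of a s] K_pos
      by (intro mult_left_mono) (auto simp: right_diff_distrib[symmetric] abs_mult)
    finally show ?thesis
      by (simp add: mult_ac)
  qed
  then have "\<bar>integral {a..T} (\<lambda>s. g u s - g w s)\<bar> \<le> integral {a..T} (\<lambda>s. K * d * weight a s)"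
    using g[OF u] g[OF w] continuous_on_subset[OF continuous_on_weight, of "{a..T}" a]
    unfolding real_norm_def[symmetric]
    by (intro integral_norm_bound_integral integrable_continuous_real) (auto intro: continuous_intros)
  also have "\<dots> = d * (weight a T - 1) / 2"
    using integral_weight[of a T] K_pos by (simp add: T_def)
  finally have "\<bar>integral {a..T} (g u) - integral {a..T} (g w)\<bar> \<le> d * (weight a T - 1) / 2"
    using g[OF u] g[OF w] by (simp add: integral_diff integrable_continuous_real)
  moreover have "0 \<le> d"
    using d[of 0] by linarith
  ultimately show ?thesis
    using weight_pos[of a T]
    by (simp add: picard_def g_def[symmetric] T_def[symmetric] diff_divide_distrib[symmetric] divide_simps)
      (simp add: algebra_simps)
qed

theorem solution_exists:
  obtains y where "y a = y0" "\<And>t. a \<le> t \<Longrightarrow> (y has_real_derivative G t (y t)) (at t within {a..})"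
proof -
  define \<Phi> where "\<Phi> u = Bcontfun (picard a y0 (apply_bcontfun u))" for u :: "real \<Rightarrow>\<^sub>C real"
  have \<Phi>: "apply_bcontfun (\<Phi> u) = picard a y0 (apply_bcontfun u)" for u
    by (simp add: \<Phi>_def Bcontfun_inverse picard_bcontfun)
  have "dist (\<Phi> u) (\<Phi> w) \<le> 1/2 * dist u w" for u w
    using picard_contraction[of u w] dist_bounded[of u _ w] by (intro dist_bound) (simp add: \<Phi> dist_real_def)
  then obtain u where u: "\<Phi> u = u"
    using banach_fix_type[of "1/2" \<Phi>] by auto
  define y where "y t = weight a t * u t" for t
  have y: "y t = y0 + integral {a..t} (\<lambda>s. G s (y s))" if "a \<le> t" for t
    using arg_cong[OF u, of "\<lambda>u. apply_bcontfun u t"] that weight_pos[of a t]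
    by (simp add: \<Phi> picard_def y_def field_simps max_def)
  show ?thesis
  proof
    show "y a = y0"
      using y[of a] by simp
    fix t assume "a \<le> t"
    have "continuous_on {a..} (\<lambda>s. G s (y s))"
      unfolding y_def using continuous_on_weight
      by (intro continuous_on_subset[OF continuous_on_rhs_along]) (auto intro: continuous_intros)
    then have "((\<lambda>t. y0 + integral {a..t} (\<lambda>s. G s (y s))) has_real_derivative G t (y t)) (at t within {a..})"
      using \<open>a \<le> t\<close> by (auto intro!: derivative_eq_intros integral_has_real_derivative_Ici)
    then show "(y has_real_derivative G t (y t)) (at t within {a..})"
      by (rule has_field_derivative_transform_within[where d = 1]) (use \<open>a \<le> t\<close> y in auto)
  qed
qed

end

lemma uniform_limit_eventually_bounded:
  fixes f :: "'a \<Rightarrow> 'b::topological_space \<Rightarrow> 'c::real_normed_vector"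
  assumes lim: "uniform_limit K f g F" and g: "continuous_on K g" and K: "compact K"
  obtains B where "\<forall>\<^sub>F n in F. \<forall>x\<in>K. norm (f n x) \<le> B"
proof -
  obtain B where B: "\<And>x. x \<in> K \<Longrightarrow> norm (g x) \<le> B"
    using compact_imp_bounded[OF compact_continuous_image[OF g K]] by (auto simp: bounded_iff)
  have "\<forall>\<^sub>F n in F. \<forall>x\<in>K. dist (f n x) (g x) < 1"
    using uniform_limitD[OF lim] by simp
  then have "\<forall>\<^sub>F n in F. \<forall>x\<in>K. norm (f n x) \<le> B + 1"
  proof eventually_elim
    case (elim n)
    show ?case
    proof
      fix x assume "x \<in> K"
      then show "norm (f n x) \<le> B + 1"
        using elim B[of x] norm_triangle_sub[of "f n x" "g x"] by (force simp: dist_norm)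
    qed
  qed
  then show ?thesis ..
qed

lemma uniform_limit_tendsto_along:
  fixes f :: "'a \<Rightarrow> 'b::metric_space \<Rightarrow> 'c::metric_space"
  assumes lim: "uniform_limit K f g F" and g: "continuous_on K g"
    and x: "(x \<longlongrightarrow> p) F" "p \<in> K" "\<forall>\<^sub>F n in F. x n \<in> K"
  shows "((\<lambda>n. f n (x n)) \<longlongrightarrow> g p) F"
proof (rule tendstoI)
  fix e :: real assume "0 < e"
  have "((\<lambda>n. g (x n)) \<longlongrightarrow> g p) F"
    using x by (intro continuous_on_tendsto_compose[OF g])
  then have "\<forall>\<^sub>F n in F. dist (g (x n)) (g p) < e / 2"
    using \<open>0 < e\<close> by (intro tendstoD) auto
  moreover have "\<forall>\<^sub>F n in F. \<forall>y\<in>K. dist (f n y) (g y) < e / 2"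
    using uniform_limitD[OF lim, of "e / 2"] \<open>0 < e\<close> by simp
  ultimately show "\<forall>\<^sub>F n in F. dist (f n (x n)) (g p) < e"
    using x(3)
  proof eventually_elim
    case (elim n)
    then have "dist (f n (x n)) (g (x n)) < e / 2"
      by blast
    then show ?case
      using elim dist_triangle[of "f n (x n)" "g p" "g (x n)"] by linarith
  qed
qed

lemma negative_if_decreasing_at_zeros:
  fixes g g' :: "real \<Rightarrow> real"
  assumes cont: "continuous_on {a..} g" and start: "g a < 0"
    and crossing: "\<And>t. a < t \<Longrightarrow> g t = 0 \<Longrightarrow> (g has_real_derivative g' t) (at t)"
      "\<And>t. a < t \<Longrightarrow> g t = 0 \<Longrightarrow> g' t < 0"
    and "a \<le> t"
  shows "g t < 0"
proof (rule ccontr)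
  assume "\<not> g t < 0"
  have no_zero_if_negative_after: "\<exists>z\<in>{a..s}. g z = 0" if "a \<le> s" "0 \<le> g s" for s
    using IVT'[of g a 0 s] that start continuous_on_subset[OF cont, of "{a..s}"] by auto
  define S where "S = {a..t} \<inter> g -` {0}"
  have "closed S"
    unfolding S_def using continuous_closed_preimage[OF continuous_on_subset[OF cont]] by auto
  moreover have "S \<noteq> {}"
    using no_zero_if_negative_after[of t] \<open>a \<le> t\<close> \<open>\<not> g t < 0\<close> by (auto simp: S_def)
  moreover have "bdd_below S"
    unfolding S_def by (auto intro: bdd_belowI[where m = a])
  ultimately have "Inf S \<in> S"
    by (rule closed_contains_Inf[rotated -1])
  then have t1: "a < Inf S" "g (Inf S) = 0"
    using start by (auto simp: S_def order_le_less)
  have before: "g s < 0" if s: "a \<le> s" "s < Inf S" for s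
  proof (rule ccontr)
    assume "\<not> g s < 0"
    then obtain z where "z \<in> {a..s}" "g z = 0"
      using no_zero_if_negative_after s by force
    moreover have "z \<in> S \<Longrightarrow> Inf S \<le> z"
      using \<open>bdd_below S\<close> by (simp add: cInf_lower)
    ultimately show False
      using s \<open>Inf S \<in> S\<close> by (auto simp: S_def)
  qed
  obtain d where "0 < d" and d: "\<And>h. 0 < h \<Longrightarrow> h < d \<Longrightarrow> g (Inf S) < g (Inf S - h)"
    using DERIV_neg_dec_left[OF crossing(1)[OF t1] crossing(2)[OF t1]] by blast
  define h where "h = min (d / 2) ((Inf S - a) / 2)"
  have "0 < h" "h < d" "a \<le> Inf S - h" "Inf S - h < Inf S"
    using \<open>0 < d\<close> t1 by (auto simp: h_def min_def field_simps)
  then have "g (Inf S) < g (Inf S - h)" "g (Inf S - h) < 0"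
    by (auto intro: d before)
  then show False
    using t1 by simp
qed

lemma solution_below_strict_supersolution:
  fixes F :: "real \<Rightarrow> real \<Rightarrow> real" and y z z' :: "real \<Rightarrow> real"
  assumes y: "\<And>t. a \<le> t \<Longrightarrow> (y has_real_derivative F t (y t)) (at t within {a..})"
    and z: "\<And>t. a \<le> t \<Longrightarrow> (z has_real_derivative z' t) (at t)"
    and supersolution: "\<And>t. a < t \<Longrightarrow> y t = z t \<Longrightarrow> F t (z t) < z' t"
    and start: "y a < z a" and "a \<le> t"
  shows "y t < z t"
proof -
  have "y t - z t < 0"
  proof (rule negative_if_decreasing_at_zeros[where g = "\<lambda>t. y t - z t" and a = a
        and g' = "\<lambda>t. F t (y t) - z' t"])
    have "continuous_on {a..} y" "continuous_on {a..} z"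
      using DERIV_continuous_on[OF y] DERIV_continuous_on[OF has_field_derivative_at_within[OF z]]
      by auto
    then show "continuous_on {a..} (\<lambda>t. y t - z t)"
      by (intro continuous_intros)
  next
    fix s assume s: "a < s"
    then have "(y has_real_derivative F s (y s)) (at s)"
      using y[of s] at_within_interior[of s "{a..}"] by simp
    then show "((\<lambda>t. y t - z t) has_real_derivative F s (y s) - z' s) (at s)"
      using z[of s] s by (auto intro: DERIV_diff)
    show "F s (y s) - z' s < 0" if "y s - z s = 0"
      using supersolution[OF s] that by simp
  qed (use start \<open>a \<le> t\<close> in auto)
  then show ?thesis
    by simp
qed

definition log_geodesic_rhs :: "(real \<Rightarrow> real \<Rightarrow> real) \<Rightarrow> (real \<Rightarrow> real) \<Rightarrow> real \<Rightarrow> real \<Rightarrow> real"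
  where "log_geodesic_rhs h xp v y = 1/2 * h v (exp y) * (exp y - xp v)"

lemma outgoing_null_geodesic_exp:
  assumes "\<And>v. v0 \<le> v \<Longrightarrow> (y has_real_derivative log_geodesic_rhs h xp v (y v)) (at v within {v0..})"
  shows "outgoing_null_geodesic h xp (\<lambda>v. 0) v0 (\<lambda>v. exp (y v))"
  unfolding outgoing_null_geodesic_def
proof (intro allI impI)
  fix v assume "v0 \<le> v"
  from DERIV_chain2[OF DERIV_exp assms[OF this]]
  show "((\<lambda>v. exp (y v)) has_real_derivative
      1/2 * h v (exp (y v)) * (exp (y v) - xp v) * (exp (y v) - 0)) (at v within {v0..})"
    by (simp add: log_geodesic_rhs_def mult_ac)
qed

lemma lipschitz_on_log_rhs:
  fixes f f' :: "real \<Rightarrow> real"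
  assumes X: "0 < X" and p: "0 \<le> p" "p \<le> X"
    and f_deriv: "\<And>x. 0 < x \<Longrightarrow> x \<le> X \<Longrightarrow> (f has_real_derivative f' x) (at x)"
    and f_bound: "\<And>x. 0 < x \<Longrightarrow> x \<le> X \<Longrightarrow> \<bar>f x\<bar> \<le> H"
    and f'_bound: "\<And>x. 0 < x \<Longrightarrow> x \<le> X \<Longrightarrow> \<bar>f' x\<bar> \<le> B"
  shows "((B * X + H) * X / 2)-lipschitz_on {..ln X} (\<lambda>y. 1/2 * f (exp y) * (exp y - p))"
proof (rule lipschitz_onI)
  have exp_le: "0 < exp y" "exp y \<le> X" if "y \<le> ln X" for y
    using that X by (auto simp: ln_ge_iff)
  have HB: "0 \<le> H" "0 \<le> B"
    using f_bound[of X] f'_bound[of X] X by auto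
  then show "0 \<le> (B * X + H) * X / 2"
    using X by simp
  fix y z assume "y \<in> {..ln X}" "z \<in> {..ln X}"
  show "dist (1/2 * f (exp y) * (exp y - p)) (1/2 * f (exp z) * (exp z - p)) \<le> (B * X + H) * X / 2 * dist y z"
    unfolding dist_real_def real_norm_def[symmetric]
  proof (rule field_differentiable_bound[of "{..ln X}"])
    fix s assume s: "s \<in> {..ln X}"
    then have e: "0 < exp s" "exp s \<le> X"
      using exp_le by auto
    from s show "((\<lambda>y. 1/2 * f (exp y) * (exp y - p)) has_field_derivative
        1/2 * (f' (exp s) * exp s * (exp s - p) + f (exp s) * exp s)) (at s within {..ln X})"
      using exp_le[of s] by (auto intro!: derivative_eq_intros DERIV_chain2[OF f_deriv] simp: field_simps)
    have "\<bar>exp s - p\<bar> \<le> X"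
      unfolding abs_le_iff using e p by linarith
    then have "\<bar>f' (exp s) * exp s * (exp s - p) + f (exp s) * exp s\<bar> \<le> B * X * X + H * X"
      using e f_bound[of "exp s"] f'_bound[of "exp s"] HB
      by (auto simp: abs_mult intro!: abs_triangle_ineq[THEN order_trans] add_mono mult_mono)
    then show "norm (1/2 * (f' (exp s) * exp s * (exp s - p) + f (exp s) * exp s)) \<le> (B * X + H) * X / 2"
      unfolding norm_mult by (simp add: algebra_simps)
  qed (use \<open>y \<in> _\<close> \<open>z \<in> _\<close> convex_real_interval in simp_all)
qed

lemma lipschitz_on_min_const: "1-lipschitz_on UNIV (\<lambda>y::real. min y c)"
  by (rule lipschitz_onI) (auto simp: dist_real_def min_def)

lemma bounded_lipschitz_rhs_truncated:
  assumes X: "0 < X"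
    and h_cont: "continuous_on ({V..} \<times> {0<..}) (\<lambda>(v, x). h v x)"
    and h_deriv: "\<And>v x. V \<le> v \<Longrightarrow> 0 < x \<Longrightarrow> x \<le> X \<Longrightarrow> (h v has_real_derivative hx v x) (at x)"
    and h_bound: "\<And>v x. V \<le> v \<Longrightarrow> 0 < x \<Longrightarrow> x \<le> X \<Longrightarrow> \<bar>h v x\<bar> \<le> H"
    and hx_bound: "\<And>v x. V \<le> v \<Longrightarrow> 0 < x \<Longrightarrow> x \<le> X \<Longrightarrow> \<bar>hx v x\<bar> \<le> B"
    and xp_cont: "continuous_on {V..} xp"
    and xp_range: "\<And>v. V \<le> v \<Longrightarrow> 0 \<le> xp v \<and> xp v \<le> X"
  shows "bounded_lipschitz_rhs (\<lambda>t y. log_geodesic_rhs h xp (max V t) (min y (ln X)))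
    (H * X / 2) ((B * X + H) * X / 2 + 1)"
proof
  have exp_le: "0 < exp (min y (ln X))" "exp (min y (ln X)) \<le> X" for y
    using X exp_le_cancel_iff[of "min y (ln X)" "ln X"] by auto
  have inner: "continuous_on UNIV (\<lambda>z :: real \<times> real. (max V (fst z), exp (min (snd z) (ln X))))"
    by (intro continuous_intros)
  have "continuous_on UNIV (\<lambda>z. h (max V (fst z)) (exp (min (snd z) (ln X))))"
    using continuous_on_compose2[OF h_cont inner] by force
  moreover have "continuous_on UNIV (\<lambda>z :: real \<times> real. xp (max V (fst z)))"
    by (rule continuous_on_compose2[OF xp_cont]) (auto intro!: continuous_intros)
  ultimately show "continuous_on UNIV (\<lambda>(t, y). log_geodesic_rhs h xp (max V t) (min y (ln X)))"
    unfolding log_geodesic_rhs_def case_prod_beta by (intro continuous_intros)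
  fix t
  have "\<bar>h (max V t) (exp (min y (ln X)))\<bar> * \<bar>exp (min y (ln X)) - xp (max V t)\<bar> \<le> H * X" for y
  proof (rule mult_mono)
    show "\<bar>exp (min y (ln X)) - xp (max V t)\<bar> \<le> X"
      unfolding abs_le_iff using exp_le[of y] xp_range[of "max V t"] by linarith
  qed (use h_bound[of "max V t", OF _ exp_le[of y]] X in auto)
  then show "\<bar>log_geodesic_rhs h xp (max V t) (min y (ln X))\<bar> \<le> H * X / 2" for y
    by (simp add: log_geodesic_rhs_def abs_mult)
  have "((B * X + H) * X / 2)-lipschitz_on {..ln X} (log_geodesic_rhs h xp (max V t))"
    unfolding log_geodesic_rhs_def
    using X xp_range[of "max V t"] h_deriv[of "max V t"] h_bound[of "max V t"] hx_bound[of "max V t"]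
    by (intro lipschitz_on_log_rhs) auto
  then have "((B * X + H) * X / 2)-lipschitz_on (range (\<lambda>y. min y (ln X))) (log_geodesic_rhs h xp (max V t))"
    by (rule lipschitz_on_subset) auto
  then have "((B * X + H) * X / 2 * 1)-lipschitz_on UNIV (\<lambda>y. log_geodesic_rhs h xp (max V t) (min y (ln X)))"
    by (rule lipschitz_on_compose2[OF lipschitz_on_min_const])
  then show "((B * X + H) * X / 2 + 1)-lipschitz_on UNIV (\<lambda>y. log_geodesic_rhs h xp (max V t) (min y (ln X)))"
    by (rule lipschitz_on_le) simp
  have "0 \<le> H" "0 \<le> B"
    using h_bound[of V X] hx_bound[of V X] X by auto
  then show "0 < (B * X + H) * X / 2 + 1"
    using X by (intro add_nonneg_pos divide_nonneg_pos mult_nonneg_nonneg add_nonneg_nonneg) auto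
qed

lemma type2_of_strict_supersolution:
  fixes h hx :: "real \<Rightarrow> real \<Rightarrow> real" and xp b b' :: "real \<Rightarrow> real"
  assumes h_cont: "continuous_on ({V..} \<times> {0<..}) (\<lambda>(v, x). h v x)"
    and h_deriv: "\<And>v x. V \<le> v \<Longrightarrow> 0 < x \<Longrightarrow> x \<le> X \<Longrightarrow> (h v has_real_derivative hx v x) (at x)"
    and h_bound: "\<And>v x. V \<le> v \<Longrightarrow> 0 < x \<Longrightarrow> x \<le> X \<Longrightarrow> \<bar>h v x\<bar> \<le> H"
    and hx_bound: "\<And>v x. V \<le> v \<Longrightarrow> 0 < x \<Longrightarrow> x \<le> X \<Longrightarrow> \<bar>hx v x\<bar> \<le> B"
    and xp_cont: "continuous_on {V..} xp"
    and xp_le: "\<And>v. V \<le> v \<Longrightarrow> xp v \<le> X"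
    and b_deriv: "\<And>v. V \<le> v \<Longrightarrow> (b has_real_derivative b' v) (at v)"
    and b_pos: "\<And>v. V \<le> v \<Longrightarrow> 0 < b v"
    and b_less: "\<And>v. V \<le> v \<Longrightarrow> b v < xp v"
    and supersolution: "\<And>v. V \<le> v \<Longrightarrow> 1/2 * h v (b v) * (b v - xp v) * b v < b' v"
  shows "type2 h xp (\<lambda>v. 0)"
proof -
  have X: "0 < X"
    using b_pos[of V] b_less[of V] xp_le[of V] by simp
  have ln_b_less: "ln (b t) < ln X" if "V \<le> t" for t
    using b_pos[OF that] b_less[OF that] xp_le[OF that] by simp
  have xp_range: "0 \<le> xp v \<and> xp v \<le> X" if "V \<le> v" for v
    using b_pos[OF that] b_less[OF that] xp_le[OF that] by simp
  define G where "G t y = log_geodesic_rhs h xp (max V t) (min y (ln X))" for t y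
  interpret bounded_lipschitz_rhs G "H * X / 2" "(B * X + H) * X / 2 + 1"
    unfolding G_def
    by (rule bounded_lipschitz_rhs_truncated[OF X h_cont h_deriv h_bound hx_bound xp_cont xp_range])
  obtain y where y_start: "y V = ln (b V) - 1"
    and y: "\<And>t. V \<le> t \<Longrightarrow> (y has_real_derivative G t (y t)) (at t within {V..})"
    using solution_exists[of V "ln (b V) - 1"] by blast
  have G_eq: "G t z = log_geodesic_rhs h xp t z" if "V \<le> t" "z \<le> ln X" for t z
    using that by (simp add: G_def max_def min_def)
  have below: "y t < ln (b t)" if "V \<le> t" for t
  proof (rule solution_below_strict_supersolution[where F = G and z = "\<lambda>t. ln (b t)"
        and z' = "\<lambda>t. b' t / b t", OF y _ _ _ that])
    show "((\<lambda>t. ln (b t)) has_real_derivative b' t / b t) (at t)" if "V \<le> t" for t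
      using b_deriv[OF that] b_pos[OF that] by (auto intro!: derivative_eq_intros)
    show "G t (ln (b t)) < b' t / b t" if "V < t" for t
    proof -
      have "G t (ln (b t)) = 1/2 * h t (b t) * (b t - xp t)"
        using that ln_b_less[of t] b_pos[of t] by (simp add: G_eq log_geodesic_rhs_def)
      moreover have "1/2 * h t (b t) * (b t - xp t) < b' t / b t"
        using supersolution[of t] b_pos[of t] that by (simp add: pos_less_divide_eq)
      ultimately show ?thesis
        by linarith
    qed
    show "y V < ln (b V)"
      using y_start by simp
  qed
  have "(y has_real_derivative log_geodesic_rhs h xp t (y t)) (at t within {V..})" if "V \<le> t" for t
    using y[OF that] G_eq[OF that, of "y t"] below[OF that] ln_b_less[OF that] by simp
  then have "outgoing_null_geodesic h xp (\<lambda>v. 0) V (\<lambda>v. exp (y v))"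
    by (rule outgoing_null_geodesic_exp)
  moreover have "0 < exp (y v) \<and> exp (y v) < xp v" if "V \<le> v" for v
    using below[OF that] b_pos[OF that] b_less[OF that] exp_less_mono[of "y v" "ln (b v)"] by simp
  ultimately show ?thesis
    unfolding type2_def by blast
qed

lemma scaled_horizon_strict_supersolution:
  fixes c x x' k :: real
  assumes "0 < c" "0 < x" "0 < k * (1 - c) / 2 + x' / x\<^sup>2"
  shows "1/2 * k * (c * x - x) * (c * x) < c * x'"
proof -
  have "c * x' - 1/2 * k * (c * x - x) * (c * x) = c * x\<^sup>2 * (k * (1 - c) / 2 + x' / x\<^sup>2)"
    using assms by (simp add: field_simps power2_eq_square)
  also have "\<dots> > 0"
    using assms by simp
  finally show ?thesis
    by simp
qed

lemma barrier_scale_exists: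
  fixes a L :: real
  assumes "0 < a / 2 + L"
  obtains c where "0 < c" "c < 1" "0 < a * (1 - c) / 2 + L"
proof -
  have "\<forall>\<^sub>F c in at_right 0. 0 < a * (1 - c) / 2 + L"
    using assms by (intro order_tendstoD(1)) (auto intro!: tendsto_eq_intros)
  moreover have "\<forall>\<^sub>F c in at_right (0::real). 0 < c \<and> c < 1"
    using eventually_at_right_real[OF zero_less_one] by eventually_elim auto
  ultimately have "\<forall>\<^sub>F c in at_right 0. 0 < c \<and> c < 1 \<and> 0 < a * (1 - c) / 2 + L"
    by eventually_elim auto
  then show ?thesis
    using that eventually_happens'[OF trivial_limit_at_right_real] by blast
qed

lemma eventually_scaled_horizon_strict_supersolution:
  fixes h :: "real \<Rightarrow> real \<Rightarrow> real" and xp xp' g0 :: "real \<Rightarrow> real"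
  assumes h_lim: "uniform_limit {0..1} h g0 at_top" "continuous_on {0..1} g0"
    and xp_pos: "\<And>v. 0 < xp v" and xp_lim: "(xp \<longlongrightarrow> 0) at_top"
    and ratio_lim: "((\<lambda>v. xp' v / (xp v)\<^sup>2) \<longlongrightarrow> L) at_top"
    and c: "0 < c" "c < 1" "0 < g0 0 * (1 - c) / 2 + L"
  shows "\<forall>\<^sub>F v in at_top. 1/2 * h v (c * xp v) * (c * xp v - xp v) * (c * xp v) < c * xp' v"
proof -
  have "((\<lambda>v. h v (c * xp v)) \<longlongrightarrow> g0 0) at_top"
  proof (rule uniform_limit_tendsto_along[OF h_lim])
    show "\<forall>\<^sub>F v in at_top. c * xp v \<in> {0..1}"
      using order_tendstoD(2)[OF xp_lim zero_less_one]
      by eventually_elim (use c xp_pos in \<open>auto intro: mult_le_one less_imp_le\<close>)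
  qed (auto intro: tendsto_mult_right_zero xp_lim)
  then have "((\<lambda>v. h v (c * xp v) * (1 - c) / 2) \<longlongrightarrow> g0 0 * (1 - c) / 2) at_top"
    by (auto intro!: tendsto_eq_intros)
  then have "((\<lambda>v. h v (c * xp v) * (1 - c) / 2 + xp' v / (xp v)\<^sup>2) \<longlongrightarrow> g0 0 * (1 - c) / 2 + L) at_top"
    using ratio_lim by (rule tendsto_add)
  then have "\<forall>\<^sub>F v in at_top. 0 < h v (c * xp v) * (1 - c) / 2 + xp' v / (xp v)\<^sup>2"
    using c(3) by (rule order_tendstoD(1))
  then show ?thesis
    by eventually_elim (rule scaled_horizon_strict_supersolution[OF c(1) xp_pos])
qed

lemma type2_of_ratio_limit:
  fixes h hx :: "real \<Rightarrow> real \<Rightarrow> real" and xp xp' g0 g1 :: "real \<Rightarrow> real"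
  assumes h_cont: "continuous_on (UNIV \<times> {0<..}) (\<lambda>(v, x). h v x)"
    and h_deriv: "\<And>v x. 0 < x \<Longrightarrow> (h v has_real_derivative hx v x) (at x)"
    and h_lim: "uniform_limit {0..1} h g0 at_top" "continuous_on {0..1} g0"
    and hx_lim: "uniform_limit {0..1} hx g1 at_top" "continuous_on {0..1} g1"
    and xp_deriv: "\<And>v. (xp has_real_derivative xp' v) (at v)"
    and xp_pos: "\<And>v. 0 < xp v" and xp_lim: "(xp \<longlongrightarrow> 0) at_top"
    and ratio_lim: "((\<lambda>v. xp' v / (xp v)\<^sup>2) \<longlongrightarrow> L) at_top"
    and ratio_bound: "0 < g0 0 / 2 + L"
  shows "type2 h xp (\<lambda>v. 0)"
proof -
  obtain c where c: "0 < c" "c < 1" "0 < g0 0 * (1 - c) / 2 + L"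
    using barrier_scale_exists[OF ratio_bound] .
  obtain H where "\<forall>\<^sub>F v in at_top. \<forall>x\<in>{0..1}. norm (h v x) \<le> H"
    using uniform_limit_eventually_bounded[OF h_lim compact_Icc] .
  moreover obtain B where "\<forall>\<^sub>F v in at_top. \<forall>x\<in>{0..1}. norm (hx v x) \<le> B"
    using uniform_limit_eventually_bounded[OF hx_lim compact_Icc] .
  moreover note eventually_scaled_horizon_strict_supersolution[OF h_lim xp_pos xp_lim ratio_lim c]
  moreover note order_tendstoD(2)[OF xp_lim zero_less_one]
  ultimately have "\<forall>\<^sub>F v in at_top. (\<forall>x\<in>{0..1}. \<bar>h v x\<bar> \<le> H) \<and> (\<forall>x\<in>{0..1}. \<bar>hx v x\<bar> \<le> B)
      \<and> 1/2 * h v (c * xp v) * (c * xp v - xp v) * (c * xp v) < c * xp' v \<and> xp v < 1"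
    by eventually_elim simp
  then obtain V where V: "\<And>v. V \<le> v \<Longrightarrow> (\<forall>x\<in>{0..1}. \<bar>h v x\<bar> \<le> H) \<and> (\<forall>x\<in>{0..1}. \<bar>hx v x\<bar> \<le> B)
      \<and> 1/2 * h v (c * xp v) * (c * xp v - xp v) * (c * xp v) < c * xp' v \<and> xp v < 1"
    unfolding eventually_at_top_linorder by blast
  show ?thesis
  proof (rule type2_of_strict_supersolution[where V = V and X = 1
        and b = "\<lambda>v. c * xp v" and b' = "\<lambda>v. c * xp' v"])
    show "continuous_on ({V..} \<times> {0<..}) (\<lambda>(v, x). h v x)"
      by (rule continuous_on_subset[OF h_cont]) auto
    show "continuous_on {V..} xp"
      using xp_deriv by (intro continuous_at_imp_continuous_on ballI DERIV_isCont)
    show "\<bar>h v x\<bar> \<le> H" "\<bar>hx v x\<bar> \<le> B" if "V \<le> v" "0 < x" "x \<le> 1" for v x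
      using V[OF that(1)] that(2,3) by auto
    show "xp v \<le> 1" "0 < c * xp v" "c * xp v < xp v"
      "1/2 * h v (c * xp v) * (c * xp v - xp v) * (c * xp v) < c * xp' v" if "V \<le> v" for v
      using V[OF that] c xp_pos[of v] by auto
    show "((\<lambda>v. c * xp v) has_real_derivative c * xp' v) (at v)" for v
      by (intro DERIV_cmult xp_deriv)
  qed (rule h_deriv)
qed

theorem corollary3:
  fixes h :: "real \<Rightarrow> real \<Rightarrow> real"
    and xp xp' :: "real \<Rightarrow> real"
    and rc hc L :: real
  assumes rc_pos: "rc > 0"
    and h_pos: "\<And>v x. x > - rc \<Longrightarrow> h v x > 0"
    and h_cont: "continuous_on (UNIV \<times> {- rc<..}) (\<lambda>(v, x). h v x)"
    and hx_cont: "continuous_on (UNIV \<times> {- rc<..}) (\<lambda>(v, x). deriv (h v) x)"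
    and h_smooth: "\<And>v n x. x > - rc \<Longrightarrow> (deriv ^^ n) (h v) differentiable (at x)"
    and h_conv: "\<And>n K. compact K \<Longrightarrow> K \<subseteq> {- rc<..} \<Longrightarrow>
        \<exists>g. uniform_limit K (\<lambda>v x. (deriv ^^ n) (h v) x) g at_top"
    and hc: "((\<lambda>v. h v 0) \<longlongrightarrow> hc) at_top"
    and xp_deriv: "\<And>v. (xp has_real_derivative xp' v) (at v)"
    and xp_decr: "\<And>v. xp' v < 0"
    and xp_pos: "\<And>v. xp v > 0"
    and xp_lim: "(xp \<longlongrightarrow> 0) at_top"
    and ratio_lim: "((\<lambda>v. xp' v / (xp v)^2) \<longlongrightarrow> L) at_top"
    and ratio_bound: "L > - hc / 2"
  shows "type2 h xp (\<lambda>v. 0)"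
proof -
  have K: "compact {0..1::real}" "{0..1::real} \<subseteq> {- rc<..}"
    using rc_pos by auto
  have "\<exists>g. uniform_limit {0..1} (\<lambda>v. (deriv ^^ n) (h v)) g at_top \<and> continuous_on {0..1} g" for n
  proof -
    obtain g where g: "uniform_limit {0..1} (\<lambda>v. (deriv ^^ n) (h v)) g at_top"
      using h_conv[OF K] by blast
    have "continuous_on {0..1} ((deriv ^^ n) (h v))" for v
      using h_smooth K(2) by (intro continuous_at_imp_continuous_on ballI differentiable_imp_continuous_within) auto
    then show ?thesis
      using uniform_limit_theorem[OF _ g] g by auto
  qed
  from this[of 0] this[of 1] obtain g0 g1
    where g0: "uniform_limit {0..1} h g0 at_top" "continuous_on {0..1} g0"
      and g1: "uniform_limit {0..1} (\<lambda>v. deriv (h v)) g1 at_top" "continuous_on {0..1} g1"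
    by auto
  have "g0 0 = hc"
    using tendsto_unique[OF _ tendsto_uniform_limitI[OF g0(1)] hc] by simp
  show ?thesis
  proof (rule type2_of_ratio_limit[OF _ _ g0 g1 xp_deriv xp_pos xp_lim ratio_lim])
    show "continuous_on (UNIV \<times> {0<..}) (\<lambda>(v, x). h v x)"
      using rc_pos by (intro continuous_on_subset[OF h_cont]) auto
    show "(h v has_real_derivative deriv (h v) x) (at x)" if "0 < x" for v x
      using h_smooth[of x 0 v] rc_pos that by (simp add: DERIV_deriv_iff_real_differentiable)
  qed (use \<open>g0 0 = hc\<close> ratio_bound in simp)
qed

end
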